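(* Let $d\ge 1$ and $r\ge 1$ be integers and let $f$ be a real-valued trigonometric polynomial on $[0,1]^d$ with $\hat f(\omega)=0$ whenever $\|\omega\|_\infty>2r$. Let $\bar f=\hat f(0)$ be its mean value and $f_\ast=\min_{x\in[0,1]^d}f(x)$. Then for every integer $s\ge 3r$, \[ 0\le f_\ast-c_\ast(f,s)\le \|f-\bar f\|_{\rm F}\Big[\Big(1-\frac{6r^2}{s^2}\Big)^{-d}-1\Big], \] and the right-hand side is equivalent to $\|f-\bar f\|_{\rm F}\cdot\frac{6r^2d}{s^2}$ as $s\to+\infty$ with $r,d,f$ fixed.
   Context: Functions on $[0,1]^d$ are identified with $1$-periodic functions on $\mathbb R^d$. Fourier coefficients: $\hat f(\omega)=\int_{[0,1]^d}f(x)e^{-2i\pi\omega^\top x}\,dx$ for $\omega\in\mathbb Z^d$. The F-norm is $\|f\|_{\rm F}=\sum_{\omega\in\mathbb Z^d}|\hat f(\omega)|$. A (complex) trigonometric polynomial of degree at most $s$ is a function $q(x)=\sum_{\omega\in\mathbb Z^d,\|\omega\|_\infty\le s}a_\omega e^{2i\pi\omega^\top x}$ with $a_\omega\in\mathbb C$. For a real-valued trigonometric polynomial $f$ and an integer $s\ge1$, $c_\ast(f,s)$ denotes the supremum of all $c\in\mathbb R$ such that $f-c=\sum_{j=1}^N|q_j|^2$ on $[0,1]^d$ for some finite family of trigonometric polynomials $q_j$ of degree at most $s$ (the value of the degree-$s$ sum-of-squares relaxation). *)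

theory Defs
  imports "HOL-Analysis.Analysis" "HOL-Library.Landau_Symbols"
begin

text \<open>Points of the cube [0,1]^d are vectors of type real^'n (d = CARD('n));
  frequencies are integer vectors of type int^'n.\<close>

definition unit_cube :: "(real^'n) set" where
  "unit_cube = {x. \<forall>i. 0 \<le> x$i \<and> x$i \<le> 1}"

definition char_fun :: "int^'n \<Rightarrow> real^'n \<Rightarrow> complex" where
  "char_fun \<omega> x = cis (2 * pi * (\<Sum>i\<in>UNIV. real_of_int (\<omega>$i) * x$i))"

definition sup_norm_int :: "int^'n \<Rightarrow> int" where
  "sup_norm_int \<omega> = Max (range (\<lambda>i. \<bar>\<omega>$i\<bar>))"

definition trig_poly_deg :: "nat \<Rightarrow> (real^'n \<Rightarrow> complex) \<Rightarrow> bool" where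
  "trig_poly_deg s q \<longleftrightarrow> (\<exists>a :: int^'n \<Rightarrow> complex.
      q = (\<lambda>x. \<Sum>\<omega>\<in>{\<omega>. sup_norm_int \<omega> \<le> int s}. a \<omega> * char_fun \<omega> x))"

definition trig_poly :: "(real^'n \<Rightarrow> complex) \<Rightarrow> bool" where
  "trig_poly q \<longleftrightarrow> (\<exists>s. trig_poly_deg s q)"

definition fourier_coeff :: "(real^'n \<Rightarrow> complex) \<Rightarrow> int^'n \<Rightarrow> complex" where
  "fourier_coeff g \<omega> = integral unit_cube (\<lambda>x. g x * cnj (char_fun \<omega> x))"

definition F_norm :: "(real^'n \<Rightarrow> complex) \<Rightarrow> real" where
  "F_norm g = infsum (\<lambda>\<omega>. norm (fourier_coeff g \<omega>)) UNIV"

definition c_star :: "(real^'n \<Rightarrow> real) \<Rightarrow> nat \<Rightarrow> real" where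
  "c_star f s = Sup {c. \<exists>qs :: (real^'n \<Rightarrow> complex) list.
      (\<forall>q\<in>set qs. trig_poly_deg s q) \<and>
      (\<forall>x\<in>unit_cube. f x - c = (\<Sum>q\<leftarrow>qs. (cmod (q x))^2))}"

definition f_min :: "(real^'n \<Rightarrow> real) \<Rightarrow> real" where
  "f_min f = Inf (f ` unit_cube)"

end

theory Submission
  imports Defs
begin

text \<open>
  Any sum-of-squares certificate gives \<open>c_*(f,s) \<le> f_*\<close>. For the other bound take the
  kernel \<open>P(x) = \<Sum>_{|k|_oo \<le> s} b(k) e_k(x)\<close> with \<open>b(k) = \<Prod>_i ((s+1)^2 - k_i^2)\<close>.
  The autocorrelation of \<open>b\<close>, normalised to be 1 at 0, is a product \<open>Q(\<omega>)\<close> of explicit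
  one-dimensional polynomial ratios, and \<open>(1 - 6r^2/s^2)^d \<le> Q(\<omega>) \<le> 1\<close> on the spectrum
  \<open>|\<omega>|_oo \<le> 2r\<close> of \<open>f\<close>. Let \<open>g = f - c\<close> with \<open>c = f_* - \<delta> ||f - fbar||_F\<close> and
  \<open>\<delta> = (1 - 6r^2/s^2)^(-d) - 1\<close>, and let \<open>h\<close> be \<open>g\<close> with its Fourier coefficients divided by
  \<open>Q\<close>. The division moves \<open>h\<close> by at most \<open>\<delta> ||f - fbar||_F\<close>, so \<open>h \<ge> f - f_* \<ge> 0\<close>.
  By discrete orthogonality on a fine grid \<open>y_j\<close>, \<open>\<Sum>_j h(y_j) |P(x - y_j)|^2\<close> is a positive
  multiple of \<open>g(x)\<close>, which writes \<open>g\<close> as a sum of squares of degree-\<open>s\<close> polynomials.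
  The asymptotic equivalence is the derivative of \<open>u \<mapsto> (1 - u)^(-d)\<close> at 0.
\<close>

section \<open>Characters and their integrals\<close>

lemma unit_cube_cbox: "(unit_cube :: (real^'n) set) = cbox 0 1"
  unfolding unit_cube_def by (auto simp: mem_box_cart)

lemma char_fun_add_freq: "char_fun (\<omega> + \<nu>) x = char_fun \<omega> x * char_fun \<nu> x"
  unfolding char_fun_def
  by (simp add: cis_mult[symmetric] sum.distrib algebra_simps)

lemma char_fun_uminus_freq: "char_fun (- \<nu>) x = cnj (char_fun \<nu> x)"
  unfolding char_fun_def by (simp add: cis_cnj sum_negf)

lemma char_fun_diff_freq: "char_fun (\<omega> - \<nu>) x = char_fun \<omega> x * cnj (char_fun \<nu> x)"
  using char_fun_add_freq[of \<omega> "-\<nu>" x] by (simp add: char_fun_uminus_freq)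

lemma char_fun_diff: "char_fun \<omega> (x - y) = char_fun \<omega> x * cnj (char_fun \<omega> y)"
  unfolding char_fun_def
  by (simp add: cis_cnj cis_mult right_diff_distrib sum_subtractf)

lemma char_fun_zero [simp]: "char_fun 0 = (\<lambda>_. 1)"
  unfolding char_fun_def by simp

lemma norm_char_fun [simp]: "cmod (char_fun \<omega> x) = 1"
  unfolding char_fun_def by simp

lemma char_fun_integrable: "char_fun \<omega> integrable_on cbox a b"
  unfolding char_fun_def by (intro integrable_continuous continuous_intros)

lemma char_fun_prod: "char_fun \<omega> x = (\<Prod>i\<in>UNIV. cis (2 * pi * (real_of_int (\<omega>$i) * x$i)))"
  unfolding char_fun_def cis_conv_exp by (simp add: sum_distrib_left exp_sum algebra_simps)

lemma char_fun_add_axis: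
  "char_fun \<omega> (x + axis i t) = cis (2 * pi * (real_of_int (\<omega>$i) * t)) * char_fun \<omega> x"
proof -
  have "(\<Prod>j\<in>UNIV. cis (2 * pi * (real_of_int (\<omega>$j) * (x + axis i t)$j)))
      = (\<Prod>j\<in>UNIV. (if j = i then cis (2 * pi * (real_of_int (\<omega>$i) * t)) else 1)
                    * cis (2 * pi * (real_of_int (\<omega>$j) * x$j)))"
    by (intro prod.cong refl) (simp add: axis_def cis_mult algebra_simps)
  then show ?thesis
    by (simp add: char_fun_prod prod.distrib)
qed

lemma cbox_inter_halfspace_le:
  fixes a b :: "real^'n"
  assumes "c \<le> b$i"
  shows "cbox a b \<inter> {x. x \<bullet> axis i 1 \<le> c} = cbox a (\<chi> j. if j = i then c else b$j)"
  using assms by (auto simp: mem_box_cart inner_axis split: if_splits) (metis order.trans)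

lemma cbox_inter_halfspace_ge:
  fixes a b :: "real^'n"
  assumes "a$i \<le> c"
  shows "cbox a b \<inter> {x. x \<bullet> axis i 1 \<ge> c} = cbox (\<chi> j. if j = i then c else a$j) b"
  using assms by (auto simp: mem_box_cart inner_axis split: if_splits) (metis order.trans)

lemma integral_shift_axis_periodic:
  fixes g :: "real^'n \<Rightarrow> 'a::banach"
  assumes periodic: "\<And>x. g (x + axis i 1) = g x"
    and integrable: "\<And>a b. g integrable_on cbox a b"
    and t: "0 \<le> t" "t \<le> 1"
  shows "integral (cbox (axis i t) (1 + axis i t)) g = integral (cbox 0 1) g"
proof -
  \<comment> \<open>cut both cubes along \<open>x_i = t\<close> resp. \<open>x_i = 1\<close>; the two pieces not shared are translates\<close>
  define mid :: "real^'n" where "mid = (\<chi> j. if j = i then t else 1)"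
  have basis: "axis i 1 \<in> (Basis :: (real^'n) set)" by simp
  have "(\<chi> j. if j = i then t else (1::real^'n)$j) = mid"
    by (simp add: mid_def vec_eq_iff)
  then have "cbox 0 1 \<inter> {x. x \<bullet> axis i 1 \<le> t} = cbox 0 mid"
    using t cbox_inter_halfspace_le[of t 1 i 0] by simp
  moreover have "(\<chi> j. if j = i then t else (0::real^'n)$j) = axis i t"
    by (simp add: axis_def vec_eq_iff)
  then have "cbox 0 1 \<inter> {x. x \<bullet> axis i 1 \<ge> t} = cbox (axis i t) (1::real^'n)"
    using t cbox_inter_halfspace_ge[of 0 i t 1] by simp
  ultimately have split_unit:
    "integral (cbox 0 1) g = integral (cbox 0 mid) g + integral (cbox (axis i t) 1) g"
    using integral_split[OF integrable basis, of 0 1 t] by simp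
  have "(\<chi> j. if j = i then 1 else (1 + axis i t :: real^'n)$j) = 1"
    by (simp add: axis_def vec_eq_iff)
  then have "cbox (axis i t) (1 + axis i t) \<inter> {x. x \<bullet> axis i 1 \<le> 1} = cbox (axis i t) (1::real^'n)"
    using t cbox_inter_halfspace_le[of 1 "1 + axis i t" i "axis i t"] by (simp add: axis_def)
  moreover have "(\<chi> j. if j = i then 1 else (axis i t :: real^'n)$j) = 0 + axis i 1"
    "1 + axis i t = mid + axis i (1::real)"
    by (simp_all add: axis_def mid_def vec_eq_iff)
  then have "cbox (axis i t) (1 + axis i t) \<inter> {x. x \<bullet> axis i 1 \<ge> 1}
      = cbox (0 + axis i 1) (mid + axis i (1::real))"
    using t cbox_inter_halfspace_ge[of "axis i t" i 1 "1 + axis i t"] by (simp add: axis_def)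
  ultimately have split_shifted: "integral (cbox (axis i t) (1 + axis i t)) g
      = integral (cbox (axis i t) 1) g + integral (cbox (0 + axis i 1) (mid + axis i 1)) g"
    using integral_split[OF integrable basis, of "axis i t" "1 + axis i t" 1] by simp
  have "integral (cbox (0 + axis i 1) (mid + axis i 1)) g = integral (cbox 0 mid) (g \<circ> (+) (axis i 1))"
    by (rule integral_shift_cbox_plus[symmetric])
  also have "g \<circ> (+) (axis i 1) = g"
    using periodic by (auto simp: add.commute)
  finally show ?thesis
    using split_unit split_shifted by simp
qed

lemma integral_char_fun_nonzero:
  fixes \<omega> :: "int^'n"
  assumes "\<omega> \<noteq> 0"
  shows "integral (cbox 0 1) (char_fun \<omega>) = 0"
proof -
  obtain i where "\<omega>$i \<noteq> 0" using assms by (auto simp: vec_eq_iff)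
  \<comment> \<open>a shift by half a period in direction \<open>i\<close> negates the integrand, but not the integral\<close>
  define w where "w = real_of_int (\<omega>$i)"
  have "\<bar>w\<bar> \<ge> 1" using \<open>\<omega>$i \<noteq> 0\<close> by (simp add: w_def)
  define t where "t = 1 / (2 * \<bar>w\<bar>)"
  have t: "0 \<le> t" "t \<le> 1" using \<open>\<bar>w\<bar> \<ge> 1\<close> by (auto simp: t_def field_simps)
  have half_turn: "cis (2 * pi * (w * t)) = -1"
  proof (cases "w > 0")
    case True then show ?thesis by (simp add: t_def)
  next
    case False
    with \<open>\<bar>w\<bar> \<ge> 1\<close> have "2 * pi * (w * t) = - pi" by (simp add: t_def)
    then show ?thesis by (simp add: complex_eq_iff)
  qed
  have "integral (cbox 0 1) (char_fun \<omega>) = integral (cbox (0 + axis i t) (1 + axis i t)) (char_fun \<omega>)"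
    by (simp add: integral_shift_axis_periodic char_fun_add_axis char_fun_integrable t)
  also have "\<dots> = integral (cbox 0 1) (\<lambda>x. - char_fun \<omega> x)"
    by (subst integral_shift_cbox_plus[symmetric])
      (simp add: o_def add.commute char_fun_add_axis half_turn flip: w_def)
  finally show ?thesis by simp
qed

lemma integral_char_fun:
  "integral unit_cube (char_fun (\<omega>::int^'n)) = (if \<omega> = 0 then 1 else 0)"
proof (cases "\<omega> = 0")
  case True
  have "(0::real^'n) \<in> cbox 0 1" by (simp add: mem_box_cart)
  then have "Henstock_Kurzweil_Integration.content (cbox 0 (1::real^'n)) = 1"
    by (subst content_cbox_cart) auto
  then show ?thesis using True by (simp add: unit_cube_cbox)
qed (simp add: unit_cube_cbox integral_char_fun_nonzero)

section \<open>Trigonometric sums and their Fourier coefficients\<close>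

definition trig_sum :: "(int^'n) set \<Rightarrow> (int^'n \<Rightarrow> complex) \<Rightarrow> real^'n \<Rightarrow> complex" where
  "trig_sum A a x = (\<Sum>\<omega>\<in>A. a \<omega> * char_fun \<omega> x)"

definition freq_box :: "int \<Rightarrow> (int^'n) set" where
  "freq_box t = {\<omega>. sup_norm_int \<omega> \<le> t}"

lemma mem_freq_box: "\<omega> \<in> freq_box t \<longleftrightarrow> (\<forall>i. \<bar>\<omega>$i\<bar> \<le> t)"
  unfolding freq_box_def sup_norm_int_def by (subst Max_le_iff) auto

lemma freq_box_eq: "freq_box t = {\<omega>. \<forall>i. \<omega>$i \<in> {-t..t}}"
  by (auto simp: mem_freq_box abs_le_iff minus_le_iff)

lemma zero_in_freq_box: "0 \<le> t \<Longrightarrow> 0 \<in> freq_box t"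
  by (simp add: mem_freq_box)

lemma finite_vecs_with_components_in:
  assumes "finite S"
  shows "finite {v::'a^'n. \<forall>i. v$i \<in> S}"
proof -
  have "{v::'a^'n. \<forall>i. v$i \<in> S} \<subseteq> vec_lambda ` (PiE UNIV (\<lambda>_. S))"
    by (auto intro!: image_eqI[of _ vec_lambda, OF vec_nth_inverse[symmetric]])
  moreover have "finite (vec_lambda ` (PiE (UNIV::'n set) (\<lambda>_. S)))"
    using assms by (intro finite_imageI finite_PiE) auto
  ultimately show ?thesis by (rule finite_subset)
qed

lemma sum_vecs_with_components_in_prod:
  fixes g :: "'n::finite \<Rightarrow> 'a \<Rightarrow> 'c::comm_semiring_1"
  assumes "finite S"
  shows "(\<Sum>v\<in>{v::'a^'n. \<forall>i. v$i \<in> S}. \<Prod>i\<in>UNIV. g i (v$i)) = (\<Prod>i\<in>UNIV. \<Sum>x\<in>S. g i x)"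
proof -
  have "(\<Prod>i\<in>UNIV. \<Sum>x\<in>S. g i x) = (\<Sum>h\<in>PiE UNIV (\<lambda>_. S). \<Prod>i\<in>UNIV. g i (h i))"
    using assms by (intro prod_sum_PiE) auto
  also have "\<dots> = (\<Sum>v\<in>{v::'a^'n. \<forall>i. v$i \<in> S}. \<Prod>i\<in>UNIV. g i (v$i))"
    by (rule sum.reindex_bij_witness[of _ vec_nth vec_lambda]) (auto simp: vec_lambda_inverse)
  finally show ?thesis by simp
qed

lemma finite_freq_box: "finite (freq_box t)"
  unfolding freq_box_eq by (rule finite_vecs_with_components_in) simp

lemma trig_poly_deg_iff: "trig_poly_deg s q \<longleftrightarrow> (\<exists>a. q = trig_sum (freq_box (int s)) a)"
  unfolding trig_poly_deg_def trig_sum_def[abs_def] freq_box_def ..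

lemma trig_sum_subtract_const:
  assumes "finite A" "0 \<in> A"
  shows "trig_sum A (\<lambda>\<omega>. a \<omega> - (if \<omega> = 0 then c else 0)) x = trig_sum A a x - c"
proof -
  have "(\<Sum>\<omega>\<in>A. (if \<omega> = 0 then c else 0) * char_fun \<omega> x) = (\<Sum>\<omega>\<in>A. if \<omega> = 0 then c else 0)"
    by (rule sum.cong) auto
  then show ?thesis
    using assms by (simp add: trig_sum_def left_diff_distrib sum_subtractf)
qed

lemma norm_trig_sum_le: "cmod (trig_sum A a x) \<le> (\<Sum>\<omega>\<in>A. cmod (a \<omega>))"
  unfolding trig_sum_def by (rule order_trans[OF norm_sum]) (simp add: norm_mult)

lemma fourier_coeff_trig_sum:
  assumes "finite A"
  shows "fourier_coeff (trig_sum A a) \<nu> = (if \<nu> \<in> A then a \<nu> else 0)"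
proof -
  have "fourier_coeff (trig_sum A a) \<nu> = integral unit_cube (\<lambda>x. \<Sum>\<omega>\<in>A. a \<omega> * char_fun (\<omega> - \<nu>) x)"
    unfolding fourier_coeff_def trig_sum_def
    by (simp add: sum_distrib_right char_fun_diff_freq mult.assoc)
  also have "\<dots> = (\<Sum>\<omega>\<in>A. a \<omega> * integral unit_cube (char_fun (\<omega> - \<nu>)))"
    using assms by (subst integral_sum)
      (auto simp: unit_cube_cbox intro!: integrable_on_mult_right char_fun_integrable)
  also have "\<dots> = (if \<nu> \<in> A then a \<nu> else 0)"
    using assms by (simp add: integral_char_fun if_distrib[of "(*) _"] cong: if_cong)
  finally show ?thesis .
qed

lemma F_norm_trig_sum:
  assumes "finite A"
  shows "F_norm (trig_sum A a) = (\<Sum>\<omega>\<in>A. cmod (a \<omega>))"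
proof -
  have "F_norm (trig_sum A a) = infsum (\<lambda>\<omega>. cmod (a \<omega>)) A"
    unfolding F_norm_def fourier_coeff_trig_sum[OF assms] by (rule infsum_cong_neutral) auto
  then show ?thesis using assms by simp
qed

lemma trig_poly_eq_trig_sum_fourier:
  assumes "trig_poly g" "finite A" "\<And>\<omega>. \<omega> \<notin> A \<Longrightarrow> fourier_coeff g \<omega> = 0"
  shows "g = trig_sum A (fourier_coeff g)"
proof -
  obtain s a where g: "g = trig_sum (freq_box (int s)) a"
    using assms(1) by (auto simp: trig_poly_def trig_poly_deg_iff)
  have coeff: "fourier_coeff g \<omega> = (if \<omega> \<in> freq_box (int s) then a \<omega> else 0)" for \<omega>
    unfolding g by (rule fourier_coeff_trig_sum[OF finite_freq_box])
  have "trig_sum (freq_box (int s)) a x = trig_sum (freq_box (int s) \<union> A) (fourier_coeff g) x" for x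
    unfolding trig_sum_def using finite_freq_box assms(2)
    by (intro sum.mono_neutral_cong_left) (auto simp: coeff)
  then have "g x = trig_sum (freq_box (int s) \<union> A) (fourier_coeff g) x" for x
    by (simp add: g)
  also have "\<dots> x = trig_sum A (fourier_coeff g) x" for x
    unfolding trig_sum_def using finite_freq_box assms(2,3)
    by (intro sum.mono_neutral_right) auto
  finally show ?thesis by auto
qed

section \<open>Discrete orthogonality on a grid\<close>

definition grid :: "nat \<Rightarrow> (nat^'n) set" where
  "grid N = {j. \<forall>i. j$i \<in> {..<N}}"

definition grid_point :: "nat \<Rightarrow> nat^'n \<Rightarrow> real^'n" where
  "grid_point N j = (\<chi> i. real (j$i) / real N)"

lemma finite_grid: "finite (grid N)"
  unfolding grid_def by (rule finite_vecs_with_components_in) simp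

lemma grid_point_in_unit_cube: "j \<in> grid N \<Longrightarrow> grid_point N j \<in> unit_cube"
  by (auto simp: grid_def grid_point_def unit_cube_def divide_simps less_imp_le)

lemma cis_fraction_neq_1:
  assumes "v \<noteq> 0" "\<bar>v\<bar> < int N"
  shows "cis (2 * pi * real_of_int v / real N) \<noteq> 1"
proof
  assume "cis (2 * pi * real_of_int v / real N) = 1"
  then obtain n :: int where n: "2 * pi * real_of_int v / real N = real_of_int n * 2 * pi"
    by (auto simp: complex_eq_iff cos_one_2pi_int)
  with assms have "v = n * int N"
    by (simp add: field_simps) (metis of_int_eq_iff of_int_mult of_int_of_nat_eq)
  with assms show False
    by (auto simp: abs_mult)
qed

lemma sum_cis_fractions:
  assumes "0 < N" "\<bar>v\<bar> < int N"
  shows "(\<Sum>m<N. cis (2 * pi * (real_of_int v * (real m / real N)))) = (if v = 0 then of_nat N else 0)"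
proof (cases "v = 0")
  case False
  define z where "z = cis (2 * pi * real_of_int v / real N)"
  have powers: "cis (2 * pi * (real_of_int v * (real m / real N))) = z ^ m" for m
    by (simp add: z_def Complex.DeMoivre algebra_simps)
  have "z \<noteq> 1" using cis_fraction_neq_1[OF False assms(2)] by (simp add: z_def)
  moreover have "z ^ N = 1"
    using assms(1) by (simp add: z_def Complex.DeMoivre)
  ultimately show ?thesis
    unfolding powers using False by (simp add: geometric_sum)
qed simp

lemma grid_sum_char_fun:
  fixes v :: "int^'n"
  assumes "0 < N" "\<And>i. \<bar>v$i\<bar> < int N"
  shows "(\<Sum>j\<in>grid N. char_fun v (grid_point N j)) = (if v = 0 then of_nat N ^ CARD('n) else 0)"
proof -
  have "(\<Sum>j\<in>grid N. char_fun v (grid_point N j))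
      = (\<Prod>i\<in>UNIV. \<Sum>m<N. cis (2 * pi * (real_of_int (v$i) * (real m / real N))))"
    unfolding grid_def char_fun_prod grid_point_def vec_lambda_beta
    by (rule sum_vecs_with_components_in_prod) simp
  also have "\<dots> = (\<Prod>i\<in>UNIV. if v$i = 0 then of_nat N else 0)"
    by (intro prod.cong refl sum_cis_fractions assms)
  also have "\<dots> = (if v = 0 then of_nat N ^ CARD('n) else 0)"
    by (auto simp: vec_eq_iff intro: prod_zero)
  finally show ?thesis .
qed

lemma trig_sum_times_norm_square:
  "trig_sum A H y * complex_of_real ((cmod (trig_sum K b (x - y)))\<^sup>2)
     = (\<Sum>\<omega>\<in>A. \<Sum>k\<in>K. \<Sum>l\<in>K.
          H \<omega> * b k * cnj (b l) * char_fun (k - l) x * char_fun (\<omega> - (k - l)) y)"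
proof -
  have norm_square: "complex_of_real ((cmod (trig_sum K b (x - y)))\<^sup>2)
      = (\<Sum>k\<in>K. \<Sum>l\<in>K. (b k * char_fun k (x - y)) * cnj (b l * char_fun l (x - y)))"
    unfolding complex_norm_square trig_sum_def cnj_sum sum_product ..
  show ?thesis
    unfolding norm_square unfolding trig_sum_def sum_distrib_right unfolding sum_distrib_left
    by (intro sum.cong refl) (simp add: char_fun_diff char_fun_diff_freq mult_ac)
qed

lemma grid_sum_times_norm_square:
  fixes A K :: "(int^'n) set" and H b :: "int^'n \<Rightarrow> complex"
  assumes "finite A" "finite K" "0 < N"
    and bound: "\<And>\<omega> k l i. \<omega> \<in> A \<Longrightarrow> k \<in> K \<Longrightarrow> l \<in> K \<Longrightarrow> \<bar>\<omega>$i - k$i + l$i\<bar> < int N"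
    and support: "\<And>k. k \<notin> K \<Longrightarrow> b k = 0"
  shows "(\<Sum>j\<in>grid N. trig_sum A H (grid_point N j) *
            complex_of_real ((cmod (trig_sum K b (x - grid_point N j)))\<^sup>2))
       = of_nat N ^ CARD('n) * trig_sum A (\<lambda>\<omega>. H \<omega> * (\<Sum>l\<in>K. b (\<omega> + l) * cnj (b l))) x"
proof -
  define T where "T \<omega> k l = H \<omega> * b k * cnj (b l) * char_fun (k - l) x" for \<omega> k l
  have "(\<Sum>j\<in>grid N. trig_sum A H (grid_point N j) *
            complex_of_real ((cmod (trig_sum K b (x - grid_point N j)))\<^sup>2))
      = (\<Sum>\<omega>\<in>A. \<Sum>k\<in>K. \<Sum>l\<in>K. T \<omega> k l * (\<Sum>j\<in>grid N. char_fun (\<omega> - (k - l)) (grid_point N j)))"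
    unfolding trig_sum_times_norm_square T_def sum_distrib_left
    by (subst sum.swap, rule sum.cong, rule refl, subst sum.swap, rule sum.cong, rule refl,
        subst sum.swap, rule refl)
  also have "\<dots> = (\<Sum>\<omega>\<in>A. \<Sum>l\<in>K. \<Sum>k\<in>K. if k = \<omega> + l then of_nat N ^ CARD('n) * T \<omega> k l else 0)"
    using bound by (subst (2) sum.swap, intro sum.cong refl)
      (simp add: grid_sum_char_fun assms(3) algebra_simps)
  also have "\<dots> = (\<Sum>\<omega>\<in>A. \<Sum>l\<in>K. of_nat N ^ CARD('n) * T \<omega> (\<omega> + l) l)"
    using assms(2) support by (intro sum.cong refl) (auto simp: T_def)
  also have "\<dots> = of_nat N ^ CARD('n) * trig_sum A (\<lambda>\<omega>. H \<omega> * (\<Sum>l\<in>K. b (\<omega> + l) * cnj (b l))) x"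
    by (simp add: T_def trig_sum_def sum_distrib_left sum_distrib_right mult_ac)
  finally show ?thesis .
qed

section \<open>The kernel and its autocorrelation\<close>

definition kernel_coeff :: "nat \<Rightarrow> int \<Rightarrow> real" where
  "kernel_coeff s j = (if \<bar>j\<bar> \<le> int s then (real s + 1)^2 - (real_of_int j)^2 else 0)"

definition kernel_autocorr :: "nat \<Rightarrow> int \<Rightarrow> real" where
  "kernel_autocorr s m = (\<Sum>j\<in>{-int s..int s}. kernel_coeff s j * kernel_coeff s (j + m))"

definition kernel_ratio :: "nat \<Rightarrow> int \<Rightarrow> real" where
  "kernel_ratio s m = kernel_autocorr s m / kernel_autocorr s 0"

definition kernel_autocorr_poly :: "real \<Rightarrow> real \<Rightarrow> real" where
  "kernel_autocorr_poly s m = 32 * s^5 + 160 * s^4 - 40 * s^3 * m^2 + 320 * s^3 + 20 * s^2 * m^3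
     - 120 * s^2 * m^2 - 20 * s^2 * m + 320 * s^2 + 40 * s * m^3 - 110 * s * m^2 - 40 * s * m
     + 158 * s - m^5 + 20 * m^3 - 30 * m^2 - 19 * m + 30"

lemma sum_int_interval_telescope:
  fixes G :: "int \<Rightarrow> 'a::ab_group_add"
  assumes "a \<le> b + 1"
  shows "(\<Sum>j\<in>{a..b}. G (j + 1) - G j) = G (b + 1) - G a"
proof -
  have "a - 1 \<le> b" using assms by simp
  then show ?thesis
  proof (induction b rule: int_ge_induct)
    case (step i)
    have "{a..i + 1} = insert (i + 1) {a..i}" using step.hyps by auto
    with step.IH show ?case by simp
  qed simp
qed

lemma kernel_autocorr_closed_form:
  assumes "0 \<le> m" "m \<le> int s"
  shows "30 * kernel_autocorr s m = kernel_autocorr_poly (real s) (real_of_int m)"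
proof -
  define G :: "int \<Rightarrow> real" where "G j = (let s = real s; m = real_of_int m; j = real_of_int j in
    6 * j^5 + 15 * j^4 * m - 15 * j^4 - 20 * j^3 * s^2 - 40 * j^3 * s + 10 * j^3 * m^2 - 30 * j^3 * m
    - 10 * j^3 - 30 * j^2 * s^2 * m + 30 * j^2 * s^2 - 60 * j^2 * s * m + 60 * j^2 * s - 15 * j^2 * m^2
    - 15 * j^2 * m + 30 * j^2 + 30 * j * s^4 + 120 * j * s^3 - 30 * j * s^2 * m^2 + 30 * j * s^2 * m
    + 170 * j * s^2 - 60 * j * s * m^2 + 60 * j * s * m + 100 * j * s - 25 * j * m^2 + 30 * j * m + 19 * j)"
    for j
  have step: "G (j + 1) - G j = 30 * (((real s + 1)^2 - (real_of_int j)^2)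
      * ((real s + 1)^2 - (real_of_int j + real_of_int m)^2))" for j
    unfolding G_def Let_def by simp algebra
  have "kernel_autocorr s m = (\<Sum>j\<in>{-int s..int s - m}. kernel_coeff s j * kernel_coeff s (j + m))"
    unfolding kernel_autocorr_def
    by (rule sum.mono_neutral_right) (use assms in \<open>auto simp: kernel_coeff_def\<close>)
  also have "\<dots> = (\<Sum>j\<in>{-int s..int s - m}. ((real s + 1)^2 - (real_of_int j)^2)
      * ((real s + 1)^2 - (real_of_int j + real_of_int m)^2))"
    by (rule sum.cong) (use assms in \<open>auto simp: kernel_coeff_def\<close>)
  finally have "30 * kernel_autocorr s m = (\<Sum>j\<in>{-int s..int s - m}. G (j + 1) - G j)"
    by (simp add: sum_distrib_left step)
  also have "\<dots> = G (int s - m + 1) - G (- int s)"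
    by (rule sum_int_interval_telescope) (use assms in auto)
  also have "\<dots> = kernel_autocorr_poly (real s) (real_of_int m)"
    unfolding G_def kernel_autocorr_poly_def Let_def by simp algebra
  finally show ?thesis .
qed

lemma kernel_autocorr_poly_lower:
  fixes s m :: real
  assumes s: "1 \<le> s" and m: "0 \<le> m" "3 * m \<le> 2 * s" "m = 0 \<or> 1 \<le> m"
  shows "kernel_autocorr_poly s 0 * (2 * s^2 - 3 * m^2) \<le> 2 * s^2 * kernel_autocorr_poly s m"
proof (cases "m = 0")
  case False
  with m have "1 \<le> m" by simp
  have identity: "2 * s^2 * kernel_autocorr_poly s m - kernel_autocorr_poly s 0 * (2 * s^2 - 3 * m^2)
    = 16 * s^5 * m^2 + 40 * s^4 * m^3 + 240 * s^4 * m^2 - 40 * s^4 * m + 80 * s^3 * m^3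
      + 740 * s^3 * m^2 - 80 * s^3 * m - 2 * s^2 * m^5 + 40 * s^2 * m^3 + 900 * s^2 * m^2
      - 38 * s^2 * m + 474 * s * m^2 + 90 * m^2"
    unfolding kernel_autocorr_poly_def by (simp add: power_numeral_reduce algebra_simps)
  \<comment> \<open>each negative monomial is dominated by a positive one, using \<open>1 \<le> m \<le> s\<close>\<close>
  have "m \<le> m^2" using \<open>1 \<le> m\<close> by (simp add: power2_eq_square)
  then have "s^4 * m \<le> s^4 * m^2" "s^3 * m \<le> s^3 * m^2" "s^2 * m \<le> s^2 * m^2"
    using s by (auto intro: mult_left_mono)
  moreover have "s^2 * m^5 \<le> s^4 * m^3"
  proof -
    have "m^2 \<le> s^2" using m s by (intro power_mono) auto
    then have "(s^2 * m^3) * m^2 \<le> (s^2 * m^3) * s^2" using m s by (intro mult_left_mono) auto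
    then show ?thesis by (simp add: power_numeral_reduce mult_ac)
  qed
  moreover have "0 \<le> s^5 * m^2" "0 \<le> s^4 * m^3" "0 \<le> s^4 * m^2" "0 \<le> s^3 * m^3"
    "0 \<le> s^3 * m^2" "0 \<le> s^2 * m^3" "0 \<le> s^2 * m^2" "0 \<le> s * m^2" "0 \<le> m^2"
    using s m by auto
  ultimately show ?thesis using identity by linarith
qed simp

lemma kernel_autocorr_poly_upper:
  fixes s m :: real
  assumes "0 \<le> m" "m \<le> s"
  shows "kernel_autocorr_poly s m \<le> kernel_autocorr_poly s 0"
proof -
  have identity: "kernel_autocorr_poly s 0 - kernel_autocorr_poly s m
    = 40 * s^3 * m^2 - 20 * s^2 * m^3 + 120 * s^2 * m^2 + 20 * s^2 * m - 40 * s * m^3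
      + 110 * s * m^2 + 40 * s * m + m^5 - 20 * m^3 + 30 * m^2 + 19 * m"
    unfolding kernel_autocorr_poly_def by (simp add: power_numeral_reduce algebra_simps)
  have "(s^2 * m^2) * m \<le> (s^2 * m^2) * s" "(s * m^2) * m \<le> (s * m^2) * s" "m^2 * m \<le> m^2 * s"
    using assms by (auto intro: mult_left_mono)
  then have "s^2 * m^3 \<le> s^3 * m^2" "s * m^3 \<le> s^2 * m^2" "m^3 \<le> s * m^2"
    by (simp_all add: power_numeral_reduce mult_ac)
  moreover have "0 \<le> s^3 * m^2" "0 \<le> s^2 * m^2" "0 \<le> s^2 * m" "0 \<le> s * m^2" "0 \<le> s * m"
    "0 \<le> m^5" "0 \<le> m^2"
    using assms by auto
  ultimately show ?thesis using identity assms(1) by linarith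
qed

lemma kernel_autocorr_uminus: "kernel_autocorr s (- m) = kernel_autocorr s m"
proof -
  have "kernel_autocorr s (- m) = (\<Sum>j\<in>{-int s..int s}. kernel_coeff s (- j) * kernel_coeff s (- j - m))"
    unfolding kernel_autocorr_def
    by (rule sum.reindex_bij_witness[of _ uminus uminus]) auto
  also have "\<dots> = kernel_autocorr s m"
    unfolding kernel_autocorr_def kernel_coeff_def by (intro sum.cong refl) (auto simp: power2_eq_square algebra_simps)
  finally show ?thesis .
qed

lemma kernel_autocorr_zero_pos: "0 < kernel_autocorr s 0"
proof -
  have "0 \<le> real s ^ 5" "0 \<le> real s ^ 4" "0 \<le> real s ^ 3" "0 \<le> real s ^ 2"
    by simp_all
  then have "0 < kernel_autocorr_poly (real s) 0"
    unfolding kernel_autocorr_poly_def by (simp; linarith)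
  then show ?thesis
    using kernel_autocorr_closed_form[of 0 s] by simp
qed

lemma kernel_ratio_zero [simp]: "kernel_ratio s 0 = 1"
  using kernel_autocorr_zero_pos[of s] by (simp add: kernel_ratio_def)

lemma kernel_ratio_bounds:
  assumes "1 \<le> r" "3 * r \<le> s" "\<bar>m\<bar> \<le> 2 * int r"
  shows "1 - 6 * real r ^ 2 / real s ^ 2 \<le> kernel_ratio s m" "kernel_ratio s m \<le> 1"
proof -
  define P where "P = kernel_autocorr_poly (real s)"
  define m' where "m' = real_of_int \<bar>m\<bar>"
  have "0 \<le> m'" "3 * m' \<le> 2 * real s" "m' \<le> 2 * real r" "m' = 0 \<or> 1 \<le> m'"
    using assms by (auto simp: m'_def)
  have "1 \<le> real s" using assms by simp
  have "0 < P 0"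
    using kernel_autocorr_zero_pos[of s] kernel_autocorr_closed_form[of 0 s] by (simp add: P_def)
  have ratio: "kernel_ratio s m = P m' / P 0"
  proof -
    have "kernel_ratio s m = kernel_autocorr s \<bar>m\<bar> / kernel_autocorr s 0"
      by (cases "0 \<le> m") (auto simp: kernel_ratio_def kernel_autocorr_uminus[of s m, symmetric])
    also have "\<dots> = (30 * kernel_autocorr s \<bar>m\<bar>) / (30 * kernel_autocorr s 0)"
      by simp
    also have "\<dots> = P m' / P 0"
      using assms by (subst (1 2) kernel_autocorr_closed_form) (auto simp: P_def m'_def)
    finally show ?thesis .
  qed
  show "kernel_ratio s m \<le> 1"
    unfolding ratio using kernel_autocorr_poly_upper[of m' "real s"] \<open>0 < P 0\<close> \<open>0 \<le> m'\<close>
      \<open>3 * m' \<le> 2 * real s\<close> by (simp add: P_def)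
  have "m'^2 \<le> (2 * real r)^2"
    using \<open>0 \<le> m'\<close> \<open>m' \<le> 2 * real r\<close> by (intro power_mono) auto
  then have "1 - 6 * real r ^ 2 / real s ^ 2 \<le> 1 - 3 * m'^2 / (2 * (real s)^2)"
    using \<open>1 \<le> real s\<close> by (simp add: field_simps power_mult_distrib)
  also have "\<dots> = P 0 * (2 * (real s)^2 - 3 * m'^2) / (2 * (real s)^2 * P 0)"
    using \<open>0 < P 0\<close> \<open>1 \<le> real s\<close> by (simp add: field_simps)
  also have "\<dots> \<le> P m' / P 0"
    using kernel_autocorr_poly_lower[OF \<open>1 \<le> real s\<close> \<open>0 \<le> m'\<close> \<open>3 * m' \<le> 2 * real s\<close>
      \<open>m' = 0 \<or> 1 \<le> m'\<close>] \<open>0 < P 0\<close> \<open>1 \<le> real s\<close>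
    by (simp add: divide_le_eq field_simps P_def)
  finally show "1 - 6 * real r ^ 2 / real s ^ 2 \<le> kernel_ratio s m"
    unfolding ratio .
qed

definition kernel_coeff_vec :: "nat \<Rightarrow> int^'n \<Rightarrow> real" where
  "kernel_coeff_vec s k = (\<Prod>i\<in>UNIV. kernel_coeff s (k$i))"

definition kernel_ratio_vec :: "nat \<Rightarrow> int^'n \<Rightarrow> real" where
  "kernel_ratio_vec s \<omega> = (\<Prod>i\<in>UNIV. kernel_ratio s (\<omega>$i))"

lemma kernel_coeff_vec_outside: "k \<notin> freq_box (int s) \<Longrightarrow> kernel_coeff_vec s k = 0"
  by (auto simp: mem_freq_box kernel_coeff_vec_def kernel_coeff_def intro: prod_zero)

lemma kernel_coeff_vec_autocorr:
  fixes \<omega> :: "int^'n"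
  shows "(\<Sum>l\<in>freq_box (int s). kernel_coeff_vec s (\<omega> + l) * kernel_coeff_vec s l)
     = kernel_autocorr s 0 ^ CARD('n) * kernel_ratio_vec s \<omega>"
proof -
  have "(\<Sum>l\<in>freq_box (int s). kernel_coeff_vec s (\<omega> + l) * kernel_coeff_vec s l)
      = (\<Sum>l\<in>freq_box (int s). \<Prod>i\<in>UNIV. kernel_coeff s (l$i) * kernel_coeff s (l$i + \<omega>$i))"
    unfolding kernel_coeff_vec_def
    by (intro sum.cong refl) (simp add: prod.distrib[symmetric] mult.commute add.commute)
  also have "\<dots> = (\<Prod>i\<in>UNIV. kernel_autocorr s (\<omega>$i))"
    unfolding freq_box_eq kernel_autocorr_def by (rule sum_vecs_with_components_in_prod) simp
  also have "\<dots> = (\<Prod>i\<in>(UNIV::'n set). kernel_autocorr s 0 * kernel_ratio s (\<omega>$i))"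
    using kernel_autocorr_zero_pos[of s] by (simp add: kernel_ratio_def)
  finally show ?thesis
    by (simp add: prod.distrib kernel_ratio_vec_def)
qed

lemma kernel_ratio_vec_zero [simp]: "kernel_ratio_vec s 0 = 1"
  by (simp add: kernel_ratio_vec_def)

lemma one_minus_ratio_scale_pos:
  assumes "1 \<le> r" "3 * r \<le> s"
  shows "0 < 1 - 6 * real r ^ 2 / real s ^ 2"
proof -
  have "3 * real r \<le> real s" "0 < real r ^ 2"
    using assms by simp_all
  then have "(3 * real r) ^ 2 \<le> real s ^ 2"
    by (intro power_mono) auto
  then have "9 * real r ^ 2 \<le> real s ^ 2"
    by (simp add: power_mult_distrib)
  with \<open>0 < real r ^ 2\<close> have "6 * real r ^ 2 < real s ^ 2"
    by linarith
  then show ?thesis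
    using assms by (simp add: field_simps)
qed

lemma kernel_ratio_vec_bounds:
  fixes \<omega> :: "int^'n"
  assumes "1 \<le> r" "3 * r \<le> s" "\<omega> \<in> freq_box (2 * int r)"
  shows "(1 - 6 * real r ^ 2 / real s ^ 2) ^ CARD('n) \<le> kernel_ratio_vec s \<omega>"
    and "kernel_ratio_vec s \<omega> \<le> 1"
proof -
  let ?a = "1 - 6 * real r ^ 2 / real s ^ 2"
  have bounds: "?a \<le> kernel_ratio s (\<omega>$i)" "kernel_ratio s (\<omega>$i) \<le> 1" for i
    using kernel_ratio_bounds[OF assms(1,2)] assms(3) by (auto simp: mem_freq_box)
  have "0 \<le> ?a"
    using one_minus_ratio_scale_pos[OF assms(1,2)] by simp
  then show "?a ^ CARD('n) \<le> kernel_ratio_vec s \<omega>"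
    using prod_mono[of UNIV "\<lambda>_. ?a" "\<lambda>i. kernel_ratio s (\<omega>$i)"] bounds
    by (simp add: kernel_ratio_vec_def)
  have "0 \<le> kernel_ratio s (\<omega>$i)" for i
    using \<open>0 \<le> ?a\<close> bounds(1) by (rule order_trans)
  then show "kernel_ratio_vec s \<omega> \<le> 1"
    unfolding kernel_ratio_vec_def using bounds(2) by (intro prod_le_1) auto
qed

section \<open>Sum-of-squares certificates\<close>

definition sos_lower_bound :: "(real^'n \<Rightarrow> real) \<Rightarrow> nat \<Rightarrow> real \<Rightarrow> bool" where
  "sos_lower_bound f s c \<longleftrightarrow> (\<exists>qs :: (real^'n \<Rightarrow> complex) list.
      (\<forall>q\<in>set qs. trig_poly_deg s q) \<and> (\<forall>x\<in>unit_cube. f x - c = (\<Sum>q\<leftarrow>qs. (cmod (q x))\<^sup>2)))"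

lemma sos_lower_bound_le:
  fixes f :: "real^'n \<Rightarrow> real"
  assumes "sos_lower_bound f s c" "y \<in> unit_cube"
  shows "c \<le> f y"
proof -
  obtain qs :: "(real^'n \<Rightarrow> complex) list"
    where "f y - c = (\<Sum>q\<leftarrow>qs. (cmod (q y))\<^sup>2)"
    using assms unfolding sos_lower_bound_def by blast
  moreover have "0 \<le> (\<Sum>q\<leftarrow>qs. (cmod (q y))\<^sup>2)"
    by (rule sum_list_nonneg) auto
  ultimately show ?thesis by simp
qed

lemma sos_lower_bound_c_star:
  assumes "sos_lower_bound f s c"
  shows "c \<le> c_star f s" "c_star f s \<le> f_min f"
proof -
  have c_star: "c_star f s = Sup (Collect (sos_lower_bound f s))"
    unfolding c_star_def sos_lower_bound_def ..
  have "(0::real^'n) \<in> unit_cube" by (simp add: unit_cube_def)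
  then have "bdd_above (Collect (sos_lower_bound f s))"
    by (intro bdd_aboveI[of _ "f 0"]) (auto dest: sos_lower_bound_le)
  then show "c \<le> c_star f s"
    unfolding c_star using assms by (intro cSup_upper) auto
  show "c_star f s \<le> f_min f"
    unfolding c_star f_min_def using assms \<open>0 \<in> unit_cube\<close>
    by (intro cSup_least cInf_greatest) (auto dest: sos_lower_bound_le)
qed

lemma trig_poly_deg_scaled_shift:
  "trig_poly_deg s (\<lambda>x. z * trig_sum (freq_box (int s)) b (x - y))"
  unfolding trig_poly_deg_iff
  by (rule exI[of _ "\<lambda>k. z * b k * cnj (char_fun k y)"])
    (simp add: fun_eq_iff trig_sum_def char_fun_diff sum_distrib_left mult_ac)

lemma sos_lower_bound_of_nonneg_multiplier:
  fixes g :: "real^'n \<Rightarrow> real" and G :: "int^'n \<Rightarrow> complex" and R s :: nat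
  assumes g: "\<And>x. complex_of_real (g x) = trig_sum (freq_box (int R)) G x"
    and ratio_nonzero: "\<And>\<omega> :: int^'n. \<omega> \<in> freq_box (int R) \<Longrightarrow> kernel_ratio_vec s \<omega> \<noteq> 0"
    and nonneg: "\<And>y. y \<in> unit_cube \<Longrightarrow>
      0 \<le> Re (trig_sum (freq_box (int R)) (\<lambda>\<omega>. G \<omega> / complex_of_real (kernel_ratio_vec s \<omega>)) y)"
  shows "sos_lower_bound g s 0"
proof -
  define A :: "(int^'n) set" where "A = freq_box (int R)"
  define K :: "(int^'n) set" where "K = freq_box (int s)"
  define N where "N = 2 * R + 2 * s + 1"
  define Z where "Z = kernel_autocorr s 0 ^ CARD('n)"
  define b where "b k = complex_of_real (kernel_coeff_vec s k)" for k :: "int^'n"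
  define h where "h = trig_sum A (\<lambda>\<omega>. G \<omega> / complex_of_real (kernel_ratio_vec s \<omega>))"
  define P where "P y x = trig_sum K b (x - y)" for y x
  have "0 < Z" unfolding Z_def using kernel_autocorr_zero_pos by simp
  \<comment> \<open>\<open>N\<close> is large enough for the discrete orthogonality relations to be exact\<close>
  have bound: "\<bar>\<omega>$i - k$i + l$i\<bar> < int N" if "\<omega> \<in> A" "k \<in> K" "l \<in> K" for \<omega> k l i
  proof -
    have "\<bar>\<omega>$i\<bar> \<le> int R" "\<bar>k$i\<bar> \<le> int s" "\<bar>l$i\<bar> \<le> int s"
      using that by (auto simp: A_def K_def mem_freq_box)
    then show ?thesis unfolding N_def by linarith
  qed
  have autocorr: "(\<Sum>l\<in>K. b (\<omega> + l) * cnj (b l)) = complex_of_real (Z * kernel_ratio_vec s \<omega>)" for \<omega>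
    unfolding b_def K_def Z_def kernel_coeff_vec_autocorr[symmetric] by simp
  have quadrature: "(\<Sum>j\<in>grid N. h (grid_point N j) * complex_of_real ((cmod (P (grid_point N j) x))\<^sup>2))
      = complex_of_real (real N ^ CARD('n) * Z * g x)" for x
  proof -
    have "(\<Sum>j\<in>grid N. h (grid_point N j) * complex_of_real ((cmod (P (grid_point N j) x))\<^sup>2))
        = of_nat N ^ CARD('n) * trig_sum A (\<lambda>\<omega>. G \<omega> / complex_of_real (kernel_ratio_vec s \<omega>)
            * (\<Sum>l\<in>K. b (\<omega> + l) * cnj (b l))) x"
      unfolding h_def P_def
    proof (rule grid_sum_times_norm_square[OF _ _ _ bound])
      show "b k = 0" if "k \<notin> K" for k
        using that by (simp add: b_def K_def kernel_coeff_vec_outside)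
    qed (simp_all add: A_def K_def N_def finite_freq_box)
    also have "trig_sum A (\<lambda>\<omega>. G \<omega> / complex_of_real (kernel_ratio_vec s \<omega>)
        * (\<Sum>l\<in>K. b (\<omega> + l) * cnj (b l))) x = complex_of_real Z * trig_sum A G x"
      unfolding autocorr trig_sum_def sum_distrib_left
    proof (intro sum.cong refl)
      fix \<omega> assume "\<omega> \<in> A"
      then have "kernel_ratio_vec s \<omega> \<noteq> 0" unfolding A_def by (rule ratio_nonzero)
      then show "G \<omega> / complex_of_real (kernel_ratio_vec s \<omega>)
          * complex_of_real (Z * kernel_ratio_vec s \<omega>) * char_fun \<omega> x
          = complex_of_real Z * (G \<omega> * char_fun \<omega> x)"
        by (simp add: field_simps)
    qed
    finally show ?thesis
      by (simp add: g A_def)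
  qed
  define w where "w j = Re (h (grid_point N j)) / (real N ^ CARD('n) * Z)" for j
  have w_nonneg: "0 \<le> w j" if "j \<in> grid N" for j
    unfolding w_def using nonneg[OF grid_point_in_unit_cube[OF that]] \<open>0 < Z\<close>
    by (simp add: h_def A_def)
  obtain js :: "(nat^'n) list" where js: "distinct js" "set js = grid N"
    using finite_distinct_list[OF finite_grid] by blast
  define qs where "qs = map (\<lambda>j x. complex_of_real (sqrt (w j)) * P (grid_point N j) x) js"
  have "g x = (\<Sum>q\<leftarrow>qs. (cmod (q x))\<^sup>2)" for x
  proof -
    have "(\<Sum>q\<leftarrow>qs. (cmod (q x))\<^sup>2) = (\<Sum>j\<in>grid N. w j * (cmod (P (grid_point N j) x))\<^sup>2)"
      unfolding qs_def using js w_nonneg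
      by (simp add: sum_list_distinct_conv_sum_set o_def norm_mult power_mult_distrib)
    also have "\<dots> = Re (\<Sum>j\<in>grid N. h (grid_point N j) * complex_of_real ((cmod (P (grid_point N j) x))\<^sup>2))
        / (real N ^ CARD('n) * Z)"
      by (simp add: w_def Re_sum sum_divide_distrib)
    also have "\<dots> = g x"
      unfolding quadrature using \<open>0 < Z\<close> by (simp add: N_def)
    finally show ?thesis ..
  qed
  moreover have "\<forall>q\<in>set qs. trig_poly_deg s q"
    by (auto simp: qs_def P_def K_def trig_poly_deg_scaled_shift)
  ultimately show ?thesis
    unfolding sos_lower_bound_def by auto
qed

lemma Re_trig_sum_divide_ge:
  fixes Q :: "int^'n \<Rightarrow> real"
  assumes "finite A" "0 < a" "Q 0 = 1" "\<And>\<omega>. \<omega> \<in> A \<Longrightarrow> a \<le> Q \<omega> \<and> Q \<omega> \<le> 1"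
  shows "Re (trig_sum A G y) - (inverse a - 1) * (\<Sum>\<omega>\<in>A - {0}. cmod (G \<omega>))
           \<le> Re (trig_sum A (\<lambda>\<omega>. G \<omega> / complex_of_real (Q \<omega>)) y)"
proof -
  define E where "E \<omega> = G \<omega> / complex_of_real (Q \<omega>) - G \<omega>" for \<omega>
  have "cmod (E \<omega>) \<le> (if \<omega> = 0 then 0 else (inverse a - 1) * cmod (G \<omega>))" if "\<omega> \<in> A" for \<omega>
  proof (cases "\<omega> = 0")
    case False
    have "a \<le> Q \<omega>" "Q \<omega> \<le> 1" using assms(4) that by auto
    have "E \<omega> = G \<omega> * complex_of_real (inverse (Q \<omega>) - 1)"
      unfolding E_def using \<open>0 < a\<close> \<open>a \<le> Q \<omega>\<close> by (simp add: field_simps)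
    then have "cmod (E \<omega>) = cmod (G \<omega>) * \<bar>inverse (Q \<omega>) - 1\<bar>"
      by (simp only: norm_mult norm_of_real)
    also have "\<dots> \<le> cmod (G \<omega>) * (inverse a - 1)"
      using assms(2) \<open>a \<le> Q \<omega>\<close> \<open>Q \<omega> \<le> 1\<close>
      by (intro mult_left_mono) (auto simp: abs_le_iff le_imp_inverse_le field_simps)
    finally show ?thesis using False by (simp add: mult.commute)
  qed (simp add: E_def assms(3))
  then have "cmod (trig_sum A E y) \<le> (\<Sum>\<omega>\<in>A. if \<omega> = 0 then 0 else (inverse a - 1) * cmod (G \<omega>))"
    by (intro order_trans[OF norm_trig_sum_le] sum_mono)
  also have "\<dots> = (inverse a - 1) * (\<Sum>\<omega>\<in>A - {0}. cmod (G \<omega>))"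
    using assms(1) by (simp add: sum_distrib_left sum.If_cases Diff_eq)
  finally have "- Re (trig_sum A E y) \<le> (inverse a - 1) * (\<Sum>\<omega>\<in>A - {0}. cmod (G \<omega>))"
    using abs_Re_le_cmod[of "trig_sum A E y"] by linarith
  moreover have "trig_sum A (\<lambda>\<omega>. G \<omega> / complex_of_real (Q \<omega>)) y = trig_sum A G y + trig_sum A E y"
    by (simp add: trig_sum_def E_def sum.distrib[symmetric] algebra_simps)
  ultimately show ?thesis by simp
qed

lemma f_min_minus_c_star_bounds:
  fixes f :: "real^'n \<Rightarrow> real" and F :: "int^'n \<Rightarrow> complex" and r s :: nat
  assumes "1 \<le> r" "3 * r \<le> s"
    and f: "\<And>x. complex_of_real (f x) = trig_sum (freq_box (2 * int r)) F x"
  defines "\<Phi> \<equiv> \<Sum>\<omega>\<in>freq_box (2 * int r) - {0}. cmod (F \<omega>)"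
  shows "0 \<le> f_min f - c_star f s"
    and "f_min f - c_star f s \<le> \<Phi> * (inverse ((1 - 6 * real r ^ 2 / real s ^ 2) ^ CARD('n)) - 1)"
proof -
  define A :: "(int^'n) set" where "A = freq_box (2 * int r)"
  define a where "a = (1 - 6 * real r ^ 2 / real s ^ 2) ^ CARD('n)"
  define c where "c = f_min f - \<Phi> * (inverse a - 1)"
  define G where "G = (\<lambda>\<omega>. F \<omega> - (if \<omega> = 0 then complex_of_real c else 0))"
  have "finite A" "0 \<in> A" by (simp_all add: A_def finite_freq_box zero_in_freq_box)
  have ratio_bounds: "a \<le> kernel_ratio_vec s \<omega>" "kernel_ratio_vec s \<omega> \<le> 1" if "\<omega> \<in> A" for \<omega>
    using kernel_ratio_vec_bounds[OF assms(1,2)] that by (auto simp: a_def A_def)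
  have "0 < a"
    using one_minus_ratio_scale_pos[OF assms(1,2)] by (simp add: a_def)
  have f_min_le: "f_min f \<le> f y" if "y \<in> unit_cube" for y
  proof -
    have "\<bar>f x\<bar> \<le> (\<Sum>\<omega>\<in>A. cmod (F \<omega>))" for x
      using norm_trig_sum_le[of A F x] by (simp add: A_def flip: f)
    then have "- (\<Sum>\<omega>\<in>A. cmod (F \<omega>)) \<le> f x" for x
      by (metis abs_le_D2 minus_le_iff)
    then have "bdd_below (f ` unit_cube)"
      by (intro bdd_belowI[of _ "- (\<Sum>\<omega>\<in>A. cmod (F \<omega>))"]) auto
    then show ?thesis unfolding f_min_def using that by (intro cInf_lower) auto
  qed
  have "sos_lower_bound (\<lambda>x. f x - c) s 0"
  proof (rule sos_lower_bound_of_nonneg_multiplier[where R = "2 * r" and G = G])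
    show "complex_of_real (f x - c) = trig_sum (freq_box (int (2 * r))) G x" for x
      using trig_sum_subtract_const[OF \<open>finite A\<close> \<open>0 \<in> A\<close>] f by (simp add: G_def A_def)
    show "kernel_ratio_vec s \<omega> \<noteq> 0" if "\<omega> \<in> freq_box (int (2 * r))" for \<omega> :: "int^'n"
      using ratio_bounds(1)[of \<omega>] \<open>0 < a\<close> that by (auto simp: A_def)
    show "0 \<le> Re (trig_sum (freq_box (int (2 * r))) (\<lambda>\<omega>. G \<omega> / complex_of_real (kernel_ratio_vec s \<omega>)) y)"
      if "y \<in> unit_cube" for y
    proof -
      have "(\<Sum>\<omega>\<in>A - {0}. cmod (G \<omega>)) = \<Phi>"
        unfolding \<Phi>_def A_def by (intro sum.cong) (auto simp: G_def)
      moreover have "Re (trig_sum A G y) = f y - c"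
        using trig_sum_subtract_const[OF \<open>finite A\<close> \<open>0 \<in> A\<close>] by (simp add: G_def A_def flip: f)
      ultimately have "f y - f_min f \<le> Re (trig_sum A (\<lambda>\<omega>. G \<omega> / complex_of_real (kernel_ratio_vec s \<omega>)) y)"
        using Re_trig_sum_divide_ge[OF \<open>finite A\<close> \<open>0 < a\<close>, of "kernel_ratio_vec s" G y] ratio_bounds
        by (simp add: c_def)
      then show ?thesis using f_min_le[OF that] by (simp add: A_def)
    qed
  qed
  then have "sos_lower_bound f s c"
    by (simp add: sos_lower_bound_def)
  then show "0 \<le> f_min f - c_star f s" "f_min f - c_star f s \<le> \<Phi> * (inverse ((1 - 6 * real r ^ 2 / real s ^ 2) ^ CARD('n)) - 1)"
    using sos_lower_bound_c_star by (fastforce simp: c_def a_def)+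
qed

section \<open>Asymptotics of the bound\<close>

lemma inverse_one_minus_power_asymp_equiv:
  fixes a :: real and d :: nat
  assumes "0 < a" "0 < d"
  shows "(\<lambda>s::nat. inverse ((1 - a / real s ^ 2) ^ d) - 1) \<sim>[at_top] (\<lambda>s. a * real d / real s ^ 2)"
proof -
  define u where "u s = a / real s ^ 2" for s :: nat
  have "((\<lambda>v::real. inverse ((1 - v) ^ d)) has_real_derivative real d) (at 0)"
    by (rule derivative_eq_intros refl | simp)+
  then have difference_quotient: "((\<lambda>v. (inverse ((1 - v) ^ d) - 1) / v) \<longlongrightarrow> real d) (at 0)"
    unfolding has_field_derivative_iff by simp
  have "filterlim u (at 0) at_top"
  proof (rule tendsto_imp_filterlim_at_right[THEN filterlim_mono])
    show "(u \<longlongrightarrow> 0) at_top" unfolding u_def by real_asymp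
    show "\<forall>\<^sub>F s in at_top. 0 < u s"
      unfolding u_def using assms(1) by (auto intro!: eventually_at_top_linorderI[of 1])
  qed (simp_all add: at_within_le_at)
  then have "((\<lambda>s. (inverse ((1 - u s) ^ d) - 1) / u s / real d) \<longlongrightarrow> real d / real d) at_top"
    by (intro tendsto_divide filterlim_compose[OF difference_quotient]) (use assms in auto)
  then have ratio: "((\<lambda>s. (inverse ((1 - u s) ^ d) - 1) / u s / real d) \<longlongrightarrow> 1) at_top"
    using assms(2) by simp
  show ?thesis
    by (intro asymp_equivI' Lim_transform_eventually[OF ratio])
      (auto simp: u_def field_simps intro!: eventually_at_top_linorderI[of 1])
qed

theorem theorem1:
  fixes f :: "real^'n \<Rightarrow> real" and r :: nat
  assumes "r \<ge> 1"
    and "trig_poly (\<lambda>x. complex_of_real (f x))"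
    and "\<And>\<omega>. sup_norm_int \<omega> > 2 * int r \<Longrightarrow> fourier_coeff (\<lambda>x. complex_of_real (f x)) \<omega> = 0"
  defines "fbar \<equiv> fourier_coeff (\<lambda>x. complex_of_real (f x)) 0"
  defines "B \<equiv> (\<lambda>s::nat. F_norm (\<lambda>x. complex_of_real (f x) - fbar) *
                 (inverse ((1 - 6 * real r ^ 2 / real s ^ 2) ^ CARD('n)) - 1))"
  shows "(\<forall>s::nat. s \<ge> 3 * r \<longrightarrow>
            0 \<le> f_min f - c_star f s \<and> f_min f - c_star f s \<le> B s)
         \<and> B \<sim>[at_top] (\<lambda>s::nat. F_norm (\<lambda>x. complex_of_real (f x) - fbar) *
                 (6 * real r ^ 2 * real CARD('n) / real s ^ 2))"
proof -
  define A :: "(int^'n) set" where "A = freq_box (2 * int r)"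
  define F where "F = fourier_coeff (\<lambda>x. complex_of_real (f x))"
  have "finite A" "0 \<in> A" by (simp_all add: A_def finite_freq_box zero_in_freq_box)
  have "(\<lambda>x. complex_of_real (f x)) = trig_sum A F"
    unfolding F_def using assms(2) \<open>finite A\<close>
    by (rule trig_poly_eq_trig_sum_fourier) (use assms(3) in \<open>auto simp: A_def freq_box_def\<close>)
  then have f: "complex_of_real (f x) = trig_sum A F x" for x
    by (rule fun_cong)
  have "(\<lambda>x. complex_of_real (f x) - fbar) = trig_sum A (\<lambda>\<omega>. F \<omega> - (if \<omega> = 0 then fbar else 0))"
    using trig_sum_subtract_const[OF \<open>finite A\<close> \<open>0 \<in> A\<close>] by (simp add: fun_eq_iff f)
  then have F_norm: "F_norm (\<lambda>x. complex_of_real (f x) - fbar) = (\<Sum>\<omega>\<in>A - {0}. cmod (F \<omega>))"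
    using \<open>finite A\<close> \<open>0 \<in> A\<close> by (simp add: F_norm_trig_sum sum.remove F_def fbar_def)
  show ?thesis
    unfolding B_def F_norm
    using f_min_minus_c_star_bounds[OF assms(1) _ f[unfolded A_def]] assms(1)
      asymp_equiv_mult[OF asymp_equiv_refl inverse_one_minus_power_asymp_equiv[of "6 * real r ^ 2" "CARD('n)"]]
    by (auto simp: A_def)
qed

end
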